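(* Let $\mu_0\cdots\mu_4\neq0$ and suppose $\mu_0+\mu_1+\mu_2-\mu_3-\mu_4\neq0$ and $\mu_0+\mu_3+\mu_4-\mu_1-\mu_2\neq0$. Put $$\alpha=\frac{2\mu_1\mu_2}{\mu_0+\mu_1+\mu_2-\mu_3-\mu_4},\qquad \beta=\frac{2\mu_3\mu_4}{\mu_0+\mu_3+\mu_4-\mu_1-\mu_2},$$ and let $R$ be the quadric in $\mathbb{P}^3$ defined by $$(\mu_1X_2+\mu_2X_1)(\mu_3X_4+\mu_4X_3)+\alpha(\mu_0X_3X_4+\mu_3X_0X_4+\mu_4X_0X_3)+\beta(\mu_0X_1X_2+\mu_1X_0X_2+\mu_2X_0X_1)+\alpha\beta X_0^2 .$$ Then $R$ is always singular (rank $\le 3$ as a quadric on $\mathbb{P}^3$), with singular point $[\mu_1+\mu_2-\mu_3-\mu_4:-\mu_1:-\mu_2:\mu_3:\mu_4]$. Moreover $R$ has rank $\le2$ (i.e. is a union of two planes) if and only if $$\sum_{i=0}^4\mu_i^3-\sum_{i\neq j}\mu_i^2\mu_j+2\sum_{i<j<k}\mu_i\mu_j\mu_k=0.$$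
   Context: $\mathbb{P}^3$ is the hyperplane $\sum_{i=0}^4X_i=0$ in $\mathbb{P}^4$ with homogeneous coordinates $[X_0:\dots:X_4]$, over $\mathbb{C}$. The middle sum runs over ordered pairs of distinct indices, the last over 3-element subsets. *)

theory Defs
  imports "HOL-Analysis.Analysis" "HOL-Library.Numeral_Type"
begin

text \<open>Homogeneous coordinates X_0..X_4 of P^4 are the components x$0..x$4 of a
vector x :: complex^5.  P^3 is the hyperplane sum X_i = 0.\<close>

definition hyperplaneP3 :: "(complex^5) set" where
  "hyperplaneP3 = {x. (\<Sum>i\<in>UNIV. x $ i) = 0}"

definition polar :: "((complex^5) \<Rightarrow> complex) \<Rightarrow> complex^5 \<Rightarrow> complex^5 \<Rightarrow> complex" where
  "polar Q x y = Q (x + y) - Q x - Q y"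

definition radical_on_P3 :: "((complex^5) \<Rightarrow> complex) \<Rightarrow> (complex^5) set" where
  "radical_on_P3 Q = {x \<in> hyperplaneP3. \<forall>y\<in>hyperplaneP3. polar Q x y = 0}"

definition rank_on_P3 :: "((complex^5) \<Rightarrow> complex) \<Rightarrow> nat" where
  "rank_on_P3 Q = vec.dim hyperplaneP3 - vec.dim (radical_on_P3 Q)"

definition alphaR :: "(nat \<Rightarrow> complex) \<Rightarrow> complex" where
  "alphaR \<mu> = 2 * \<mu> 1 * \<mu> 2 / (\<mu> 0 + \<mu> 1 + \<mu> 2 - \<mu> 3 - \<mu> 4)"

definition betaR :: "(nat \<Rightarrow> complex) \<Rightarrow> complex" where
  "betaR \<mu> = 2 * \<mu> 3 * \<mu> 4 / (\<mu> 0 + \<mu> 3 + \<mu> 4 - \<mu> 1 - \<mu> 2)"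

definition quadR :: "(nat \<Rightarrow> complex) \<Rightarrow> complex^5 \<Rightarrow> complex" where
  "quadR \<mu> X =
     (\<mu> 1 * X$2 + \<mu> 2 * X$1) * (\<mu> 3 * X$4 + \<mu> 4 * X$3)
   + alphaR \<mu> * (\<mu> 0 * X$3 * X$4 + \<mu> 3 * X$0 * X$4 + \<mu> 4 * X$0 * X$3)
   + betaR \<mu> * (\<mu> 0 * X$1 * X$2 + \<mu> 1 * X$0 * X$2 + \<mu> 2 * X$0 * X$1)
   + alphaR \<mu> * betaR \<mu> * (X$0)^2"

definition sing_pointR :: "(nat \<Rightarrow> complex) \<Rightarrow> complex^5" where
  "sing_pointR \<mu> = (\<chi> i::5. if i = 0 then \<mu> 1 + \<mu> 2 - \<mu> 3 - \<mu> 4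
      else if i = 1 then - \<mu> 1 else if i = 2 then - \<mu> 2 else if i = 3 then \<mu> 3 else \<mu> 4)"

end

theory Submission
  imports Defs
begin

text \<open>The gradient of quadR vanishes at p = sing_pointR, so p lies in the radical of the polar
form restricted to the hyperplane P^3, and the rank is at most 3. Since p$4 = \<mu> 4 \<noteq> 0, the
radical has dimension at least 2 exactly when it contains a nonzero point with X_4 = 0. On the
plane X_4 = 0 of P^3, coordinatised by X_1, X_2, X_3, a point is in the radical iff its gradient
has equal entries; equality of the entries 0, 1, 2, 3 gives a 3x3 linear system, and the entry 4
then agrees as well because every gradient is orthogonal to p. Clearing the denominators s and t
of alphaR and betaR, the determinant of that system times s^2 t^2 is
4 \<mu> 0 \<mu> 1 \<mu> 2 \<mu> 3 (\<mu> 4)^3 times the cubic of the statement.\<close>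

lemma det_matrix_eq_0_iff:
  fixes f :: "'a::field^'n \<Rightarrow> 'a^'n"
  assumes "Vector_Spaces.linear (*s) (*s) f"
  shows "det (matrix f) = 0 \<longleftrightarrow> (\<exists>v. v \<noteq> 0 \<and> f v = 0)"
  using det_nz_iff_inj_gen[OF assms] vec.linear_inj_iff_eq_0[OF assms] by blast

lemma sum_zero_annihilator_iff:
  fixes g :: "'a::field^'n"
  shows "(\<forall>y. (\<Sum>i\<in>UNIV. y $ i) = 0 \<longrightarrow> (\<Sum>i\<in>UNIV. g $ i * y $ i) = 0) \<longleftrightarrow> (\<exists>c. g = vec c)"
proof
  assume orth: "\<forall>y. (\<Sum>i\<in>UNIV. y $ i) = 0 \<longrightarrow> (\<Sum>i\<in>UNIV. g $ i * y $ i) = 0"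
  have "g $ i = g $ j" for i j
  proof -
    let ?y = "axis i 1 - axis j 1 :: 'a^'n"
    have "(\<Sum>k\<in>UNIV. ?y $ k) = 0"
      by (simp add: sum_subtractf axis_def)
    then have "(\<Sum>k\<in>UNIV. g $ k * ?y $ k) = 0"
      using orth by blast
    moreover have "(\<Sum>k\<in>UNIV. g $ k * ?y $ k) = g $ i - g $ j"
      by (simp add: axis_def right_diff_distrib sum_subtractf if_distrib[of "(*) _"] cong: if_cong)
    ultimately show ?thesis
      by simp
  qed
  then show "\<exists>c. g = vec c"
    by (metis vec_eq_iff vec_component)
next
  assume "\<exists>c. g = vec c"
  then show "\<forall>y. (\<Sum>i\<in>UNIV. y $ i) = 0 \<longrightarrow> (\<Sum>i\<in>UNIV. g $ i * y $ i) = 0"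
    by (auto simp: sum_distrib_left[symmetric])
qed

lemma dim_sum_zero_hyperplane:
  "vec.dim {x :: 'a::field^'n. (\<Sum>i\<in>UNIV. x $ i) = 0} = CARD('n) - 1"
proof -
  define H where "H = {x :: 'a^'n. (\<Sum>i\<in>UNIV. x $ i) = 0}"
  fix i :: 'n
  let ?e = "axis i (1::'a)"
  have "vec.subspace H"
    unfolding vec.subspace_def H_def by (simp add: sum.distrib sum_distrib_left[symmetric])
  then have span_H: "vec.span H = H"
    by simp
  have "?e \<notin> vec.span H"
    unfolding span_H unfolding H_def by (simp add: axis_def)
  moreover have "vec.span (insert ?e H) = UNIV"
  proof -
    have "z - (\<Sum>i\<in>UNIV. z $ i) *s ?e \<in> vec.span H" for z
      unfolding span_H unfolding H_def
      by (simp add: sum_subtractf axis_def if_distrib[of "(*) _"] cong: if_cong)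
    then show ?thesis
      unfolding vec.span_insert by blast
  qed
  then have "vec.dim (insert ?e H) = CARD('n)"
    by (metis vec.dim_span vec_dim_card)
  ultimately show ?thesis
    unfolding H_def[symmetric] by (simp add: vec.dim_insert)
qed

lemma linear_vec_nth: "Vector_Spaces.linear (*s) (*) (\<lambda>x :: 'a::field^'n. x $ k)"
  by (simp add: Vector_Spaces.linear_iff vec.vector_space_axioms
      vector_space_over_itself.vector_space_axioms)

context finite_dimensional_vector_space
begin

lemma two_le_dim_iff_ex_nonzero_kernel:
  assumes "subspace S" and "p \<in> S" and "l p \<noteq> 0" and "Vector_Spaces.linear scale (*) l"
  shows "2 \<le> dim S \<longleftrightarrow> (\<exists>q\<in>S. q \<noteq> 0 \<and> l q = 0)"
proof -
  have hom: "module_hom scale (*) l"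
    using assms(4) by (simp add: module_hom_iff_linear)
  show ?thesis
  proof
    assume "2 \<le> dim S"
    show "\<exists>q\<in>S. q \<noteq> 0 \<and> l q = 0"
    proof (rule ccontr)
      assume no_q: "\<not> (\<exists>q\<in>S. q \<noteq> 0 \<and> l q = 0)"
      have "S \<subseteq> span {p}"
      proof
        fix x
        assume "x \<in> S"
        define q where "q = x - scale (l x / l p) p"
        have "q \<in> S"
          unfolding q_def using assms(1,2) \<open>x \<in> S\<close> by (simp add: subspace_diff subspace_scale)
        moreover have "l q = 0"
          unfolding q_def using assms(3) by (simp add: module_hom.diff[OF hom] module_hom.scale[OF hom])
        ultimately have "x = scale (l x / l p) p"
          using no_q unfolding q_def by auto
        then show "x \<in> span {p}"
          by (metis span_base span_scale singletonI)
      qed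
      then have "dim S \<le> card {p}"
        by (rule dim_le_card) simp
      then show False
        using \<open>2 \<le> dim S\<close> by simp
    qed
  next
    assume "\<exists>q\<in>S. q \<noteq> 0 \<and> l q = 0"
    then obtain q where "q \<in> S" "q \<noteq> 0" "l q = 0"
      by blast
    have "p \<notin> span {q}"
      using \<open>l q = 0\<close> assms(3) by (auto simp: span_singleton module_hom.scale[OF hom])
    then have "independent {p, q}"
      using \<open>q \<noteq> 0\<close> by (simp add: independent_insert)
    moreover have "p \<noteq> q"
      using \<open>l q = 0\<close> assms(3) by auto
    ultimately show "2 \<le> dim S"
      using independent_card_le_dim[of "{p, q}" S] \<open>p \<in> S\<close> \<open>q \<in> S\<close> by simp
  qed
qed

end

lemma exhaust_5:
  fixes i :: 5
  shows "i = 0 \<or> i = 1 \<or> i = 2 \<or> i = 3 \<or> i = 4"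
proof (induct i)
  case (of_int z)
  then have "z = 0 \<or> z = 1 \<or> z = 2 \<or> z = 3 \<or> z = 4"
    by fastforce
  then show ?case
    by auto
qed

lemma forall_5: "(\<forall>i::5. P i) \<longleftrightarrow> P 0 \<and> P 1 \<and> P 2 \<and> P 3 \<and> P 4"
  by (metis exhaust_5)

lemma sum_5: "sum f (UNIV :: 5 set) = f 0 + f 1 + f 2 + f 3 + f 4"
proof -
  have "(UNIV :: 5 set) = {0, 1, 2, 3, 4}"
    using exhaust_5 by auto
  then show ?thesis
    unfolding \<open>UNIV = _\<close> by (simp add: ac_simps)
qed

lemma radical_on_P3_iff:
  assumes "\<And>y. polar Q x y = (\<Sum>i\<in>UNIV. g $ i * y $ i)"
  shows "x \<in> radical_on_P3 Q \<longleftrightarrow> x \<in> hyperplaneP3 \<and> (\<exists>c. g = vec c)"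
  using sum_zero_annihilator_iff[of g]
  by (auto simp: radical_on_P3_def hyperplaneP3_def assms)

lemma dim_hyperplaneP3: "vec.dim hyperplaneP3 = 4"
  unfolding hyperplaneP3_def dim_sum_zero_hyperplane by simp

lemma alphaR_betaR_mult_denominators:
  assumes "\<mu> 0 + \<mu> 1 + \<mu> 2 - \<mu> 3 - \<mu> 4 \<noteq> 0" and "\<mu> 0 + \<mu> 3 + \<mu> 4 - \<mu> 1 - \<mu> 2 \<noteq> 0"
  shows "alphaR \<mu> * (\<mu> 0 + \<mu> 1 + \<mu> 2 - \<mu> 3 - \<mu> 4) = 2 * \<mu> 1 * \<mu> 2"
    and "betaR \<mu> * (\<mu> 0 + \<mu> 3 + \<mu> 4 - \<mu> 1 - \<mu> 2) = 2 * \<mu> 3 * \<mu> 4"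
  using assms by (simp_all add: alphaR_def betaR_def)

definition gradR :: "(nat \<Rightarrow> complex) \<Rightarrow> complex^5 \<Rightarrow> complex^5" where
  "gradR \<mu> X = (\<chi> i.
     if i = 0 then alphaR \<mu> * (\<mu> 3 * X$4 + \<mu> 4 * X$3) + betaR \<mu> * (\<mu> 1 * X$2 + \<mu> 2 * X$1)
                   + 2 * alphaR \<mu> * betaR \<mu> * X$0
     else if i = 1 then \<mu> 2 * (\<mu> 3 * X$4 + \<mu> 4 * X$3) + betaR \<mu> * (\<mu> 0 * X$2 + \<mu> 2 * X$0)
     else if i = 2 then \<mu> 1 * (\<mu> 3 * X$4 + \<mu> 4 * X$3) + betaR \<mu> * (\<mu> 0 * X$1 + \<mu> 1 * X$0)
     else if i = 3 then \<mu> 4 * (\<mu> 1 * X$2 + \<mu> 2 * X$1) + alphaR \<mu> * (\<mu> 0 * X$4 + \<mu> 4 * X$0)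
     else \<mu> 3 * (\<mu> 1 * X$2 + \<mu> 2 * X$1) + alphaR \<mu> * (\<mu> 0 * X$3 + \<mu> 3 * X$0))"

lemma gradR_nth:
  "gradR \<mu> X $ 0 = alphaR \<mu> * (\<mu> 3 * X$4 + \<mu> 4 * X$3) + betaR \<mu> * (\<mu> 1 * X$2 + \<mu> 2 * X$1)
                   + 2 * alphaR \<mu> * betaR \<mu> * X$0"
  "gradR \<mu> X $ 1 = \<mu> 2 * (\<mu> 3 * X$4 + \<mu> 4 * X$3) + betaR \<mu> * (\<mu> 0 * X$2 + \<mu> 2 * X$0)"
  "gradR \<mu> X $ 2 = \<mu> 1 * (\<mu> 3 * X$4 + \<mu> 4 * X$3) + betaR \<mu> * (\<mu> 0 * X$1 + \<mu> 1 * X$0)"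
  "gradR \<mu> X $ 3 = \<mu> 4 * (\<mu> 1 * X$2 + \<mu> 2 * X$1) + alphaR \<mu> * (\<mu> 0 * X$4 + \<mu> 4 * X$0)"
  "gradR \<mu> X $ 4 = \<mu> 3 * (\<mu> 1 * X$2 + \<mu> 2 * X$1) + alphaR \<mu> * (\<mu> 0 * X$3 + \<mu> 3 * X$0)"
  by (simp_all add: gradR_def)

lemma polar_quadR: "polar (quadR \<mu>) x y = (\<Sum>i\<in>UNIV. gradR \<mu> x $ i * y $ i)"
  unfolding polar_def quadR_def sum_5 gradR_nth
  by (simp add: algebra_simps power2_eq_square)

lemma sing_pointR_nth:
  "sing_pointR \<mu> $ 0 = \<mu> 1 + \<mu> 2 - \<mu> 3 - \<mu> 4" "sing_pointR \<mu> $ 1 = - \<mu> 1"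
  "sing_pointR \<mu> $ 2 = - \<mu> 2" "sing_pointR \<mu> $ 3 = \<mu> 3" "sing_pointR \<mu> $ 4 = \<mu> 4"
  by (simp_all add: sing_pointR_def)

lemmas radical_quadR_iff = radical_on_P3_iff[OF polar_quadR]

lemma gradR_add: "gradR \<mu> (x + y) = gradR \<mu> x + gradR \<mu> y"
  by (simp add: vec_eq_iff forall_5 gradR_nth algebra_simps)

lemma gradR_scale: "gradR \<mu> (c *s x) = c *s gradR \<mu> x"
  by (simp add: vec_eq_iff forall_5 gradR_nth algebra_simps)

lemma subspace_radical_quadR: "vec.subspace (radical_on_P3 (quadR \<mu>))"
  unfolding vec.subspace_def Ball_def radical_quadR_iff hyperplaneP3_def mem_Collect_eq
  using gradR_scale[of \<mu> 0]
  by (auto simp: gradR_add gradR_scale sum.distrib sum_distrib_left[symmetric]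
      vec_add[symmetric] vec_cmul[symmetric]) (metis vec_0)

lemma gradR_sing_pointR:
  assumes "\<mu> 0 + \<mu> 1 + \<mu> 2 - \<mu> 3 - \<mu> 4 \<noteq> 0" and "\<mu> 0 + \<mu> 3 + \<mu> 4 - \<mu> 1 - \<mu> 2 \<noteq> 0"
  shows "gradR \<mu> (sing_pointR \<mu>) = 0"
proof -
  have "gradR \<mu> (sing_pointR \<mu>) $ 0 = 0" "gradR \<mu> (sing_pointR \<mu>) $ 1 = 0"
    "gradR \<mu> (sing_pointR \<mu>) $ 2 = 0" "gradR \<mu> (sing_pointR \<mu>) $ 3 = 0"
    "gradR \<mu> (sing_pointR \<mu>) $ 4 = 0"
    using alphaR_betaR_mult_denominators[OF assms] unfolding gradR_nth sing_pointR_nth by algebra+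
  then show ?thesis
    by (simp add: vec_eq_iff forall_5)
qed

lemma sing_pointR_in_radical:
  assumes "\<mu> 0 + \<mu> 1 + \<mu> 2 - \<mu> 3 - \<mu> 4 \<noteq> 0" and "\<mu> 0 + \<mu> 3 + \<mu> 4 - \<mu> 1 - \<mu> 2 \<noteq> 0"
  shows "sing_pointR \<mu> \<in> radical_on_P3 (quadR \<mu>)"
  unfolding radical_quadR_iff gradR_sing_pointR[OF assms]
  by (simp add: hyperplaneP3_def sum_5 sing_pointR_nth) (metis vec_0)

lemma gradR_orthogonal_sing_pointR:
  assumes "\<mu> 0 + \<mu> 1 + \<mu> 2 - \<mu> 3 - \<mu> 4 \<noteq> 0" and "\<mu> 0 + \<mu> 3 + \<mu> 4 - \<mu> 1 - \<mu> 2 \<noteq> 0"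
  shows "(\<Sum>i\<in>UNIV. gradR \<mu> x $ i * sing_pointR \<mu> $ i) = 0"
proof -
  have "(\<Sum>i\<in>UNIV. gradR \<mu> x $ i * sing_pointR \<mu> $ i) = polar (quadR \<mu>) (sing_pointR \<mu>) x"
    unfolding polar_quadR[symmetric] polar_def by (simp add: add.commute)
  also have "\<dots> = 0"
    unfolding polar_quadR gradR_sing_pointR[OF assms] by simp
  finally show ?thesis .
qed

definition from_X123 :: "complex^3 \<Rightarrow> complex^5" where
  "from_X123 v = (\<chi> i. if i = 0 then - (v$1 + v$2 + v$3) else if i = 1 then v$1
     else if i = 2 then v$2 else if i = 3 then v$3 else 0)"

lemma from_X123_nth:
  "from_X123 v $ 0 = - (v$1 + v$2 + v$3)" "from_X123 v $ 1 = v$1" "from_X123 v $ 2 = v$2"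
  "from_X123 v $ 3 = v$3" "from_X123 v $ 4 = 0"
  by (simp_all add: from_X123_def)

lemma from_X123_eq_0_iff: "from_X123 v = 0 \<longleftrightarrow> v = 0"
  by (auto simp: vec_eq_iff forall_3 forall_5 from_X123_nth)

definition reduced_gradR :: "(nat \<Rightarrow> complex) \<Rightarrow> complex^3 \<Rightarrow> complex^3" where
  "reduced_gradR \<mu> v =
     (let g = gradR \<mu> (from_X123 v) in vector [g$1 - g$0, g$2 - g$0, g$3 - g$0])"

lemma linear_reduced_gradR: "Vector_Spaces.linear (*s) (*s) (reduced_gradR \<mu>)"
  unfolding Vector_Spaces.linear_iff
  by (simp add: vec.vector_space_axioms vec_eq_iff forall_3 reduced_gradR_def Let_def gradR_nth
      from_X123_nth algebra_simps)

lemma radical_meets_X4_zero_iff: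
  assumes "\<mu> 4 \<noteq> 0"
    and "\<mu> 0 + \<mu> 1 + \<mu> 2 - \<mu> 3 - \<mu> 4 \<noteq> 0" and "\<mu> 0 + \<mu> 3 + \<mu> 4 - \<mu> 1 - \<mu> 2 \<noteq> 0"
  shows "(\<exists>q\<in>radical_on_P3 (quadR \<mu>). q \<noteq> 0 \<and> q $ 4 = 0)
    \<longleftrightarrow> (\<exists>v. v \<noteq> 0 \<and> reduced_gradR \<mu> v = 0)"
proof
  assume "\<exists>q\<in>radical_on_P3 (quadR \<mu>). q \<noteq> 0 \<and> q $ 4 = 0"
  then obtain q c where q: "q \<in> hyperplaneP3" "gradR \<mu> q = vec c" "q \<noteq> 0" "q $ 4 = 0"
    by (auto simp: radical_quadR_iff)
  define v :: "complex^3" where "v = vector [q$1, q$2, q$3]"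
  have "q $ 0 = - (q $ 1 + q $ 2 + q $ 3)"
    unfolding eq_neg_iff_add_eq_0 using q(1,4) by (simp add: hyperplaneP3_def sum_5 add.assoc)
  then have "from_X123 v = q"
    using q(4) by (simp add: vec_eq_iff forall_5 from_X123_nth v_def)
  show "\<exists>v. v \<noteq> 0 \<and> reduced_gradR \<mu> v = 0"
  proof (intro exI conjI)
    show "v \<noteq> 0"
      using \<open>from_X123 v = q\<close> q(3) by (metis from_X123_eq_0_iff)
    show "reduced_gradR \<mu> v = 0"
    proof -
      have "gradR \<mu> (from_X123 v) = vec c"
        using \<open>from_X123 v = q\<close> q(2) by simp
      then show ?thesis
        by (simp add: reduced_gradR_def vec_eq_iff forall_3)
    qed
  qed
next
  assume "\<exists>v. v \<noteq> 0 \<and> reduced_gradR \<mu> v = 0"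
  then obtain v where "v \<noteq> 0" "reduced_gradR \<mu> v = 0"
    by blast
  define g where "g = gradR \<mu> (from_X123 v)"
  have g123: "g $ 1 = g $ 0" "g $ 2 = g $ 0" "g $ 3 = g $ 0"
    using \<open>reduced_gradR \<mu> v = 0\<close> unfolding reduced_gradR_def g_def Let_def vec_eq_iff forall_3
    by simp_all
  have "(\<Sum>i\<in>UNIV. g $ i * sing_pointR \<mu> $ i) = 0"
    unfolding g_def by (rule gradR_orthogonal_sing_pointR[OF assms(2,3)])
  then have "\<mu> 4 * (g $ 4 - g $ 0) = 0"
    by (simp add: sum_5 g123 sing_pointR_nth algebra_simps)
  then have "g = vec (g $ 0)"
    using assms(1) g123 by (simp add: vec_eq_iff forall_5)
  then have "\<exists>c. gradR \<mu> (from_X123 v) = vec c"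
    unfolding g_def by (rule exI)
  moreover have "from_X123 v \<in> hyperplaneP3"
    by (simp add: hyperplaneP3_def sum_5 from_X123_nth)
  ultimately have "from_X123 v \<in> radical_on_P3 (quadR \<mu>)"
    by (simp add: radical_quadR_iff)
  moreover have "from_X123 v \<noteq> 0" "from_X123 v $ 4 = 0"
    using \<open>v \<noteq> 0\<close> by (simp_all add: from_X123_nth from_X123_eq_0_iff)
  ultimately show "\<exists>q\<in>radical_on_P3 (quadR \<mu>). q \<noteq> 0 \<and> q $ 4 = 0"
    by blast
qed

definition cubic_invariant :: "(nat \<Rightarrow> complex) \<Rightarrow> complex" where
  "cubic_invariant \<mu> =
     (\<Sum>i\<in>{0..4}. \<mu> i ^ 3)
   - (\<Sum>i\<in>{0..4}. \<Sum>j\<in>{0..4} - {i}. \<mu> i ^ 2 * \<mu> j)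
   + 2 * (\<Sum>i\<in>{0..4}. \<Sum>j\<in>{i<..4}. \<Sum>k\<in>{j<..4}. \<mu> i * \<mu> j * \<mu> k)"

lemma det_reduced_gradR:
  assumes "\<mu> 0 + \<mu> 1 + \<mu> 2 - \<mu> 3 - \<mu> 4 \<noteq> 0" (is "?s \<noteq> 0")
    and "\<mu> 0 + \<mu> 3 + \<mu> 4 - \<mu> 1 - \<mu> 2 \<noteq> 0" (is "?t \<noteq> 0")
  shows "det (matrix (reduced_gradR \<mu>)) * (?s^2 * ?t^2)
    = 4 * \<mu> 0 * \<mu> 1 * \<mu> 2 * \<mu> 3 * \<mu> 4 ^ 3 * cubic_invariant \<mu>"
  using alphaR_betaR_mult_denominators[OF assms] unfolding cubic_invariant_def
  by (simp add: det_3 matrix_def reduced_gradR_def Let_def gradR_nth from_X123_nth axis_def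
      sum_diff1 atLeastSucAtMost_greaterThanAtMost[symmetric] sum.atLeast_Suc_atMost numeral_eq_Suc)
    algebra

theorem proposition8:
  fixes \<mu> :: "nat \<Rightarrow> complex"
  assumes "\<mu> 0 * \<mu> 1 * \<mu> 2 * \<mu> 3 * \<mu> 4 \<noteq> 0"
    and "\<mu> 0 + \<mu> 1 + \<mu> 2 - \<mu> 3 - \<mu> 4 \<noteq> 0"
    and "\<mu> 0 + \<mu> 3 + \<mu> 4 - \<mu> 1 - \<mu> 2 \<noteq> 0"
  shows "rank_on_P3 (quadR \<mu>) \<le> 3
       \<and> sing_pointR \<mu> \<noteq> 0
       \<and> sing_pointR \<mu> \<in> radical_on_P3 (quadR \<mu>)
       \<and> (rank_on_P3 (quadR \<mu>) \<le> 2 \<longleftrightarrow>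
            (\<Sum>i\<in>{0..4}. \<mu> i ^ 3)
          - (\<Sum>i\<in>{0..4}. \<Sum>j\<in>{0..4} - {i}. \<mu> i ^ 2 * \<mu> j)
          + 2 * (\<Sum>i\<in>{0..4}. \<Sum>j\<in>{i<..4}. \<Sum>k\<in>{j<..4}. \<mu> i * \<mu> j * \<mu> k) = 0)"
proof -
  let ?R = "radical_on_P3 (quadR \<mu>)" and ?p = "sing_pointR \<mu>"
  have p_in_R: "?p \<in> ?R"
    using sing_pointR_in_radical[OF assms(2,3)] .
  have p4: "?p $ 4 = \<mu> 4" and "\<mu> 4 \<noteq> 0"
    using assms(1) by (simp_all add: sing_pointR_nth)
  then have "?p \<noteq> 0"
    by auto
  then have "vec.dim ?R \<noteq> 0"
    using p_in_R by auto
  have "2 \<le> vec.dim ?R \<longleftrightarrow> (\<exists>q\<in>?R. q \<noteq> 0 \<and> q $ 4 = 0)"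
    using vec.two_le_dim_iff_ex_nonzero_kernel[OF subspace_radical_quadR p_in_R _ linear_vec_nth]
      p4 \<open>\<mu> 4 \<noteq> 0\<close> by simp
  also have "\<dots> \<longleftrightarrow> det (matrix (reduced_gradR \<mu>)) = 0"
    using radical_meets_X4_zero_iff[OF \<open>\<mu> 4 \<noteq> 0\<close> assms(2,3)] det_matrix_eq_0_iff[OF linear_reduced_gradR]
    by simp
  also have "\<dots> \<longleftrightarrow> cubic_invariant \<mu> = 0"
    using det_reduced_gradR[OF assms(2,3)] assms by auto
  finally show ?thesis
    using p_in_R \<open>?p \<noteq> 0\<close> \<open>vec.dim ?R \<noteq> 0\<close>
    unfolding rank_on_P3_def dim_hyperplaneP3 cubic_invariant_def by (auto simp del: vec.dim_eq_0)
qed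

end
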